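(* The function $R:\Sigma^n\to\Sigma^n$ is bijective.
   Context: Let $k\ge 2$, $\Sigma=\{0,\dots,k-1\}$ with arithmetic modulo $k$, $n\ge 1$, and $s=s[0]\cdots s[n-1]\in\Sigma^n$. For an integer $j$, $ICR_j(s)=s[1]\cdots s[n-1](s[0]+j)$; each $ICR_j$ is a bijection of $\Sigma^n$. Let $\mathbf N$ be the set of cycles (orbits) of the permutation $ICR_1$ of $\Sigma^n$; $orbit(s)$ is the cycle containing $s$. Let $\mathbf G$ be the directed graph on $\mathbf N$ with an arc $(\mathcal U,\mathcal V)$ iff some $s\in\mathcal U$ has $ICR_0(s)\in\mathcal V$. Let $\mathbf T$ be a directed spanning tree of $\mathbf G$ rooted at $\mathcal R\in\mathbf N$ (arcs from parent to child), with parent map $parent$ on $\mathbf N\setminus\{\mathcal R\}$; the depth of a cycle is its distance from the root (root has depth $0$). For each $\mathcal U\ne\mathcal R$, a representative $rep(\mathcal U)$ is a fixed node $s\in\mathcal U$ with $ICR_0^{-1}(s)\in parent(\mathcal U)$ and $s[n-1]\equiv \text{depth}(\mathcal U)\pmod k$ (such a node is assumed to exist and one is fixed). $\mathrm{Reps}$ is the set of all representatives. Define $R(s)=ICR_0(s)$ if $ICR_0(s)\in\mathrm{Reps}$; $R(s)=ICR_2(s)$ if $ICR_1(s)\in\mathrm{Reps}$; $R(s)=ICR_1(s)$ otherwise (these cases do not conflict). *)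

theory Defs
  imports Main
begin

definition strings :: "nat \<Rightarrow> nat \<Rightarrow> nat list set" where
  "strings k n = {s. length s = n \<and> set s \<subseteq> {0..<k}}"

definition ICR :: "nat \<Rightarrow> int \<Rightarrow> nat list \<Rightarrow> nat list" where
  "ICR k j s = tl s @ [nat ((int (hd s) + j) mod int k)]"

definition orbit :: "nat \<Rightarrow> nat list \<Rightarrow> nat list set" where
  "orbit k s = {((ICR k 1) ^^ m) s | m. True}"

definition cycles :: "nat \<Rightarrow> nat \<Rightarrow> nat list set set" where
  "cycles k n = orbit k ` strings k n"

definition G_arc :: "nat \<Rightarrow> nat \<Rightarrow> nat list set \<Rightarrow> nat list set \<Rightarrow> bool" where
  "G_arc k n U V \<longleftrightarrow> U \<in> cycles k n \<and> V \<in> cycles k n \<and> (\<exists>s\<in>U. ICR k 0 s \<in> V)"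

definition spanning_tree :: "nat \<Rightarrow> nat \<Rightarrow> nat list set \<Rightarrow> (nat list set \<Rightarrow> nat list set) \<Rightarrow> bool" where
  "spanning_tree k n root par \<longleftrightarrow>
     root \<in> cycles k n \<and>
     (\<forall>U \<in> cycles k n - {root}. par U \<in> cycles k n \<and> G_arc k n (par U) U) \<and>
     (\<forall>U \<in> cycles k n. \<exists>m. (par ^^ m) U = root)"

definition depth :: "nat list set \<Rightarrow> (nat list set \<Rightarrow> nat list set) \<Rightarrow> nat list set \<Rightarrow> nat" where
  "depth root par U = (LEAST m. (par ^^ m) U = root)"

definition valid_reps :: "nat \<Rightarrow> nat \<Rightarrow> nat list set \<Rightarrow> (nat list set \<Rightarrow> nat list set)
    \<Rightarrow> (nat list set \<Rightarrow> nat list) \<Rightarrow> bool" where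
  "valid_reps k n root par rep \<longleftrightarrow>
     (\<forall>U \<in> cycles k n - {root}.
        rep U \<in> U \<and> (\<exists>t \<in> par U. ICR k 0 t = rep U) \<and>
        last (rep U) mod k = depth root par U mod k)"

definition Reps :: "nat \<Rightarrow> nat \<Rightarrow> nat list set \<Rightarrow> (nat list set \<Rightarrow> nat list) \<Rightarrow> nat list set" where
  "Reps k n root rep = rep ` (cycles k n - {root})"

definition Rmap :: "nat \<Rightarrow> nat \<Rightarrow> nat list set \<Rightarrow> (nat list set \<Rightarrow> nat list) \<Rightarrow> nat list \<Rightarrow> nat list" where
  "Rmap k n root rep s =
     (if ICR k 0 s \<in> Reps k n root rep then ICR k 0 s
      else if ICR k 1 s \<in> Reps k n root rep then ICR k 2 s
      else ICR k 1 s)"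

end

theory Submission
  imports Defs "HOL-Combinatorics.Permutations"
begin

(* For s = a # w, R s = w @ [\<sigma>\<^sub>w a], where \<sigma>\<^sub>w keeps the symbols c marked by
   w @ [c] \<in> Reps fixed and moves every other symbol to its successor mod k, jumping over
   a marked successor. Such a shift is a permutation of the alphabet unless two adjacent
   symbols c, c+1 are marked with c+2 \<noteq> c. But if w @ [c] and w @ [c+1] are both
   representatives, the node c # w lies in the parent of the cycle of w @ [c] and is sent by
   ICR_1 to w @ [c+1], so that parent is the cycle of w @ [c+1]; their depths differ by one,
   and the last-symbol condition on representatives gives c + 2 \<equiv> c (mod k). *)

definition shift_skipping :: "('a \<Rightarrow> 'a) \<Rightarrow> ('a \<Rightarrow> bool) \<Rightarrow> 'a \<Rightarrow> 'a" where
  "shift_skipping N P a = (if P a then a else if P (N a) then N (N a) else N a)"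

lemma inj_on_shift_skipping:
  assumes inj: "inj_on N A" and maps: "N ` A \<subseteq> A"
    and marked_adjacent: "\<And>x. x \<in> A \<Longrightarrow> P x \<Longrightarrow> P (N x) \<Longrightarrow> N (N x) = x"
  shows "inj_on (shift_skipping N P) A"
proof -
  have N_eq: "N x = N y \<longleftrightarrow> x = y" if "x \<in> A" "y \<in> A" for x y
    using inj that by (auto dest: inj_onD)
  have marked_fixed: "b = a" if "b \<in> A" "P a" "shift_skipping N P b = a" for a b
    using that maps marked_adjacent[of "N b"] N_eq[of "N (N b)" b]
    unfolding shift_skipping_def by (auto split: if_splits simp: image_subset_iff)
  show ?thesis
  proof (rule inj_onI)
    fix a b assume ab: "a \<in> A" "b \<in> A" "shift_skipping N P a = shift_skipping N P b"
    show "a = b"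
    proof (cases "P a \<or> P b")
      case True
      then show ?thesis using marked_fixed ab by (metis shift_skipping_def)
    next
      case False
      then show ?thesis using ab maps N_eq unfolding shift_skipping_def
        by (auto split: if_splits simp: image_subset_iff)
    qed
  qed
qed

lemma bij_betw_funpow_return:
  assumes "finite A" "bij_betw f A A" "x \<in> A"
  obtains p where "p > 0" "(f ^^ p) x = x"
proof -
  have "permutation (restrict_id f A)"
    using permutes_restrict_id[OF assms(2)] assms(1) by (rule permutes_imp_permutation[rotated])
  then obtain p where p: "p > 0" "(restrict_id f A ^^ p) x = x"
    by (rule permutation_self)
  have "(restrict_id f A ^^ m) x = (f ^^ m) x" for m
    by (induction m) (simp_all add: bij_betw_apply[OF bij_betw_funpow[OF assms(2)] assms(3)])
  with p that show thesis by simp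
qed

lemma funpow_orbit_eq:
  assumes "p > 0" "(f ^^ p) s = s" "t \<in> {(f ^^ m) s | m. True}"
  shows "{(f ^^ m) t | m. True} = {(f ^^ m) s | m. True}"
proof -
  obtain i where t: "t = (f ^^ i) s" using assms(3) by blast
  have "(f ^^ m) t = (f ^^ (m + i)) s" for m
    by (simp add: t funpow_add)
  moreover have "(f ^^ m) s = (f ^^ (m + p * i - i)) t" for m
  proof -
    have "(f ^^ (m + p * i - i)) t = (f ^^ (m + p * i - i + i)) s"
      by (simp add: t funpow_add)
    also have "m + p * i - i + i = m + p * i"
      using \<open>p > 0\<close> by (cases p) simp_all
    also have "(f ^^ (m + p * i)) s = (f ^^ m) s"
      using funpow_mod_eq[OF assms(2)] by (metis mod_mult_self2)
    finally show ?thesis ..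
  qed
  ultimately show ?thesis by blast
qed

lemma ICR_of_nat: "ICR k (int j) s = tl s @ [(hd s + j) mod k]"
  by (simp add: ICR_def flip: of_nat_add zmod_int)

lemma strings_hd_tl:
  assumes "s \<in> strings k n" "0 < n"
  shows "s = hd s # tl s" "hd s < k"
  using assms by (cases s; auto simp: strings_def)+

lemma ICR_in_strings:
  assumes "s \<in> strings k n" "0 < n" "0 < k"
  shows "ICR k j s \<in> strings k n"
  using assms by (cases s) (auto simp: strings_def ICR_def nat_less_iff)

lemma finite_strings: "finite (strings k n)"
proof -
  have "strings k n = {s. set s \<subseteq> {0..<k} \<and> length s = n}"
    by (auto simp: strings_def)
  then show ?thesis
    using finite_lists_length_eq[of "{0..<k}" n] by simp
qed

lemma inj_on_Suc_mod: "inj_on (\<lambda>x. Suc x mod k) {0..<k}"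
  by (rule inj_onI) (auto simp: mod_Suc split: if_splits)

lemma bij_betw_ICR_1:
  assumes "0 < n" "0 < k"
  shows "bij_betw (ICR k 1) (strings k n) (strings k n)"
proof -
  have "inj_on (ICR k 1) (strings k n)"
  proof (rule inj_onI)
    fix s t assume st: "s \<in> strings k n" "t \<in> strings k n" "ICR k 1 s = ICR k 1 t"
    then have "tl s = tl t" "Suc (hd s) mod k = Suc (hd t) mod k"
      using ICR_of_nat[of k 1] by simp_all
    moreover have "hd s = hd t"
      using inj_onD[OF inj_on_Suc_mod[of k], of "hd s" "hd t"] calculation(2)
        strings_hd_tl(2)[OF st(1) assms(1)] strings_hd_tl(2)[OF st(2) assms(1)]
      by simp
    ultimately show "s = t"
      using strings_hd_tl(1) st(1,2) assms(1) by metis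
  qed
  moreover have "ICR k 1 ` strings k n \<subseteq> strings k n"
    using ICR_in_strings[OF _ assms] by blast
  ultimately show ?thesis
    using endo_inj_surj[OF finite_strings] by (simp add: bij_betw_def)
qed

lemma orbit_eq_if_mem_orbit:
  assumes "s \<in> strings k n" "0 < n" "0 < k" "t \<in> orbit k s"
  shows "orbit k t = orbit k s"
proof -
  obtain p where "p > 0" "((ICR k 1) ^^ p) s = s"
    using bij_betw_funpow_return[OF finite_strings bij_betw_ICR_1[OF assms(2,3)] assms(1)] .
  from this assms(4) show ?thesis
    unfolding orbit_def by (rule funpow_orbit_eq)
qed

lemma cycles_memD:
  assumes "U \<in> cycles k n" "x \<in> U" "0 < n" "0 < k"
  shows "U = orbit k x" "x \<in> strings k n"
proof -
  obtain s where s: "s \<in> strings k n" "U = orbit k s"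
    using assms(1) by (auto simp: cycles_def)
  then show "U = orbit k x"
    using orbit_eq_if_mem_orbit assms(2-4) by simp
  from assms(2) obtain m where "x = ((ICR k 1) ^^ m) s"
    by (auto simp: s(2) orbit_def)
  then show "x \<in> strings k n"
    using bij_betw_apply[OF bij_betw_funpow[OF bij_betw_ICR_1[OF assms(3,4)]] s(1)] by simp
qed

lemma ICR_1_in_cycle:
  assumes "U \<in> cycles k n" "x \<in> U" "0 < n" "0 < k"
  shows "ICR k 1 x \<in> U"
proof -
  have "ICR k 1 x = ((ICR k 1) ^^ 1) x" by simp
  then show ?thesis
    using cycles_memD(1)[OF assms] unfolding orbit_def by blast
qed

lemma cycles_eqI:
  assumes "U \<in> cycles k n" "V \<in> cycles k n" "x \<in> U" "x \<in> V" "0 < n" "0 < k"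
  shows "U = V"
  using cycles_memD(1) assms by metis

lemma depth_parent:
  assumes "spanning_tree k n root par" "U \<in> cycles k n" "U \<noteq> root"
  shows "depth root par U = Suc (depth root par (par U))"
proof -
  obtain m where "(par ^^ m) U = root"
    using assms(1,2) by (auto simp: spanning_tree_def)
  then have "(LEAST m. (par ^^ m) U = root) = Suc (LEAST m. (par ^^ Suc m) U = root)"
    by (rule Least_Suc) (use assms(3) in simp)
  then show ?thesis
    by (simp add: depth_def funpow_Suc_right del: funpow.simps)
qed

lemma valid_repsD:
  assumes "valid_reps k n root par rep" "U \<in> cycles k n" "U \<noteq> root"
  shows "rep U \<in> U" "\<exists>t \<in> par U. ICR k 0 t = rep U"
    "last (rep U) mod k = depth root par U mod k"
  using assms unfolding valid_reps_def by blast+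

lemma Reps_consecutive_last_symbols:
  assumes "0 < n" "0 < k" "spanning_tree k n root par" "valid_reps k n root par rep"
    and "w @ [a] \<in> Reps k n root rep" "w @ [Suc a mod k] \<in> Reps k n root rep" "a < k"
  shows "Suc (Suc a) mod k = a"
proof -
  obtain U where U: "U \<in> cycles k n" "U \<noteq> root" "rep U = w @ [a]"
    using assms(5) unfolding Reps_def by force
  obtain V where V: "V \<in> cycles k n" "V \<noteq> root" "rep V = w @ [Suc a mod k]"
    using assms(6) unfolding Reps_def by force
  have rep_U: "\<exists>t \<in> par U. ICR k 0 t = w @ [a]" "a mod k = depth root par U mod k"
    using valid_repsD(2,3)[OF assms(4) U(1,2)] U(3) by simp_all
  have rep_V: "w @ [Suc a mod k] \<in> V" "Suc a mod k = depth root par V mod k"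
    using valid_repsD(1,3)[OF assms(4) V(1,2)] V(3) by simp_all
  have par_U: "par U \<in> cycles k n"
    using assms(3) U(1,2) unfolding spanning_tree_def by blast
  from rep_U(1) obtain t where t: "t \<in> par U" "ICR k 0 t = w @ [a]" by blast
  have "t \<in> strings k n" using cycles_memD(2)[OF par_U t(1) assms(1,2)] .
  then have "ICR k 0 t = tl t @ [hd t]"
    using ICR_of_nat[of k 0 t] strings_hd_tl(2) assms(1) by simp
  then have "ICR k 1 t = w @ [Suc a mod k]"
    using ICR_of_nat[of k 1 t] t(2) by simp
  then have "par U = V"
    using cycles_eqI[OF par_U V(1) _ rep_V(1) assms(1,2)] ICR_1_in_cycle[OF par_U t(1) assms(1,2)]
    by simp
  then have "depth root par U = Suc (depth root par V)"
    using depth_parent[OF assms(3) U(1,2)] by simp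
  then have "a = Suc (depth root par V) mod k"
    using rep_U(2) assms(7) by simp
  also have "\<dots> = Suc (Suc a mod k) mod k"
    using rep_V(2) by (simp add: mod_Suc_eq)
  finally show ?thesis
    by (simp add: mod_Suc_eq)
qed

lemma Rmap_eq_shift_skipping:
  assumes "s \<in> strings k n" "0 < n"
  shows "Rmap k n root rep s =
    tl s @ [shift_skipping (\<lambda>x. Suc x mod k) (\<lambda>x. tl s @ [x] \<in> Reps k n root rep) (hd s)]"
proof -
  have "ICR k 0 s = tl s @ [hd s]" "ICR k 1 s = tl s @ [Suc (hd s) mod k]"
    "ICR k 2 s = tl s @ [Suc (Suc (hd s) mod k) mod k]"
    using ICR_of_nat[of k 0 s] ICR_of_nat[of k 1 s] ICR_of_nat[of k 2 s] strings_hd_tl(2)[OF assms]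
    by (simp_all add: mod_Suc_eq)
  then show ?thesis
    unfolding Rmap_def shift_skipping_def by simp
qed

lemma inj_on_Rmap:
  assumes "0 < n" "0 < k" "spanning_tree k n root par" "valid_reps k n root par rep"
  shows "inj_on (Rmap k n root rep) (strings k n)"
proof (rule inj_onI)
  let ?N = "\<lambda>x. Suc x mod k" and ?P = "\<lambda>w x. w @ [x] \<in> Reps k n root rep"
  fix s t assume st: "s \<in> strings k n" "t \<in> strings k n" "Rmap k n root rep s = Rmap k n root rep t"
  then have tl: "tl s = tl t"
    and hd: "shift_skipping ?N (?P (tl s)) (hd s) = shift_skipping ?N (?P (tl s)) (hd t)"
    using Rmap_eq_shift_skipping[OF _ assms(1)] by auto
  have inj_shift: "inj_on (shift_skipping ?N (?P w)) {0..<k}" for w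
  proof (rule inj_on_shift_skipping[OF inj_on_Suc_mod])
    show "?N ` {0..<k} \<subseteq> {0..<k}" using assms(2) by auto
    show "?N (?N x) = x" if "x \<in> {0..<k}" "?P w x" "?P w (?N x)" for x
      using Reps_consecutive_last_symbols[OF assms] that by (simp add: mod_Suc_eq)
  qed
  have "hd s = hd t"
    using inj_onD[OF inj_shift hd] strings_hd_tl(2)[OF _ assms(1)] st(1,2) by simp
  then show "s = t"
    using tl strings_hd_tl(1)[OF _ assms(1)] st(1,2) by metis
qed

theorem lemma10:
  fixes k n :: nat and root :: "nat list set"
    and par :: "nat list set \<Rightarrow> nat list set" and rep :: "nat list set \<Rightarrow> nat list"
  assumes "k \<ge> 2" and "n \<ge> 1"
    and "spanning_tree k n root par"
    and "valid_reps k n root par rep"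
  shows "bij_betw (Rmap k n root rep) (strings k n) (strings k n)"
proof -
  have n: "0 < n" and k: "0 < k" using assms(1,2) by simp_all
  have "Rmap k n root rep ` strings k n \<subseteq> strings k n"
    unfolding Rmap_def using ICR_in_strings[OF _ n k] by auto
  with inj_on_Rmap[OF n k assms(3,4)] show ?thesis
    using endo_inj_surj[OF finite_strings] by (simp add: bij_betw_def)
qed

end
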